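(* Assume $\sigma_-<1/2$ and let $\rho=1-\frac{\sigma_-}{1-\sigma_-}$ and $C=\frac{2}{\rho(1-\rho)^3}$. Let $\theta\in\Theta$ with $K^\theta\ge2$ and, for a probability measure $\mu$ on $[K^\theta]$, consider under $\theta$ the process $(X_t,Y_t)_{t\ge0}$ where $X_0\sim\mu$, $(X_t)_{t\ge0}$ is a Markov chain with transition matrix $Q^\theta$, and conditionally on $(X_t)$ the $Y_t$ are independent with densities $y\mapsto\gamma^\theta_{X_t}(y-T^\theta_{X_t}(t))$. Then for all $t\ge1$, all probability measures $\mu,\nu$ on $[K^\theta]$, all $x\in[K^\theta]$ and all $y_0^t\in\mathbb R^{t+1}$, $$\big|\log p^\theta(y_t\mid y_0^{t-1},X_t\ne x,X_0\sim\mu)-\log p^\theta(y_t\mid y_0^{t-1},X_t\ne x,X_0\sim\nu)\big|\le C\rho^t,$$ where $p^\theta(y_t\mid y_0^{t-1},X_t\ne x,X_0\sim\mu)$ is the conditional density of $Y_t$ at $y_t$ given $Y_0^{t-1}=y_0^{t-1}$ and $X_t\ne x$ in this process.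
   Context: Fix integers $K\ge1$, $d\ge1$, $\sigma_-\in(0,1)$; $[K']=\{1,\dots,K'\}$; $\Delta_{K'}$ = probability vectors on $[K']$; $\Sigma^{\sigma_-}_{K'}$ = $K'\times K'$ stochastic matrices with all entries $\ge\sigma_-$; $\mathbb R_d[X]$ = real polynomials of degree $\le d$ on $\mathbb R_+$; $\Gamma$ a set of probability densities on $\mathbb R$. $\Theta=\bigcup_{K'=1}^K\{[K']\}\times\Delta_{K'}\times\Sigma^{\sigma_-}_{K'}\times\Gamma^{K'}\times(\mathbb R_d[X])^{K'}$, elements $\theta=(K^\theta,\pi^\theta,Q^\theta,\gamma^\theta,T^\theta)$. *)

theory Defs
  imports "HOL-Analysis.Analysis" "HOL-Computational_Algebra.Polynomial"
begin

definition prob_vec :: "nat \<Rightarrow> (nat \<Rightarrow> real) \<Rightarrow> bool" where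
  "prob_vec n p \<longleftrightarrow> (\<forall>i\<in>{1..n}. 0 \<le> p i) \<and> (\<Sum>i\<in>{1..n}. p i) = 1"

definition stoch_lb :: "nat \<Rightarrow> real \<Rightarrow> (nat \<Rightarrow> nat \<Rightarrow> real) \<Rightarrow> bool" where
  "stoch_lb n \<sigma> Q \<longleftrightarrow> (\<forall>i\<in>{1..n}. \<forall>j\<in>{1..n}. \<sigma> \<le> Q i j)
                       \<and> (\<forall>i\<in>{1..n}. (\<Sum>j\<in>{1..n}. Q i j) = 1)"

definition prob_density :: "(real \<Rightarrow> real) \<Rightarrow> bool" where
  "prob_density f \<longleftrightarrow> f \<in> borel_measurable lborel \<and> (\<forall>y. 0 \<le> f y)
                      \<and> (\<integral>\<^sup>+ y. ennreal (f y) \<partial>lborel) = 1"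

text \<open>Membership of theta = (K', pi, Q, gamma, T) in Theta.\<close>
definition in_Theta ::
  "nat \<Rightarrow> nat \<Rightarrow> real \<Rightarrow> (real \<Rightarrow> real) set \<Rightarrow>
   nat \<Rightarrow> (nat \<Rightarrow> real) \<Rightarrow> (nat \<Rightarrow> nat \<Rightarrow> real) \<Rightarrow> (nat \<Rightarrow> real \<Rightarrow> real) \<Rightarrow> (nat \<Rightarrow> real poly) \<Rightarrow> bool"
  where
  "in_Theta K d \<sigma> \<Gamma> K' \<pi> Q \<gamma> T \<longleftrightarrow>
     1 \<le> K' \<and> K' \<le> K \<and> prob_vec K' \<pi> \<and> stoch_lb K' \<sigma> Q
     \<and> (\<forall>k\<in>{1..K'}. \<gamma> k \<in> \<Gamma>) \<and> (\<forall>k\<in>{1..K'}. degree (T k) \<le> d)"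

definition emis :: "(nat \<Rightarrow> real \<Rightarrow> real) \<Rightarrow> (nat \<Rightarrow> real poly) \<Rightarrow> nat \<Rightarrow> nat \<Rightarrow> real \<Rightarrow> real" where
  "emis \<gamma> T s k y = \<gamma> k (y - poly (T k) (real s))"

text \<open>Joint density of (Y_0,...,Y_{m-1}) at (y 0,...,y (m-1)) together with the event
  X_t \<noteq> x, for the chain started from mu (sum over hidden paths x_0..x_t).\<close>
definition hmm_joint ::
  "nat \<Rightarrow> (nat \<Rightarrow> real) \<Rightarrow> (nat \<Rightarrow> nat \<Rightarrow> real) \<Rightarrow> (nat \<Rightarrow> real \<Rightarrow> real) \<Rightarrow> (nat \<Rightarrow> real poly)
   \<Rightarrow> nat \<Rightarrow> nat \<Rightarrow> nat \<Rightarrow> (nat \<Rightarrow> real) \<Rightarrow> real" where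
  "hmm_joint K' \<mu> Q \<gamma> T t m x y =
     (\<Sum>xs\<in>PiE {0..t} (\<lambda>_. {1..K'}).
        if xs t \<noteq> x then
          \<mu> (xs 0) * (\<Prod>s\<in>{1..t}. Q (xs (s - 1)) (xs s))
                   * (\<Prod>s\<in>{0..<m}. emis \<gamma> T s (xs s) (y s))
        else 0)"

text \<open>Conditional density p(y_t | y_0^{t-1}, X_t \<noteq> x, X_0 ~ mu).\<close>
definition hmm_cond ::
  "nat \<Rightarrow> (nat \<Rightarrow> real) \<Rightarrow> (nat \<Rightarrow> nat \<Rightarrow> real) \<Rightarrow> (nat \<Rightarrow> real \<Rightarrow> real) \<Rightarrow> (nat \<Rightarrow> real poly)
   \<Rightarrow> nat \<Rightarrow> nat \<Rightarrow> (nat \<Rightarrow> real) \<Rightarrow> real" where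
  "hmm_cond K' \<mu> Q \<gamma> T t x y =
     hmm_joint K' \<mu> Q \<gamma> T t (Suc t) x y / hmm_joint K' \<mu> Q \<gamma> T t t x y"

end

theory Submission
  imports Defs
begin

text \<open>
  Let \<open>r = \<sigma>/(1-\<sigma>)\<close> and \<open>\<rho> = 1 - r\<close>. The forward variables \<open>\<alpha>\<^sub>n(k)\<close> (joint density of
  \<open>y\<^sub>0\<^sup>n\<^sup>-\<^sup>1\<close> and \<open>X\<^sub>n = k\<close>) for the two initial laws are compared through an interval
  \<open>[m, M]\<close> containing all ratios \<open>\<alpha>\<^sup>\<mu>\<^sub>n(k) / \<alpha>\<^sup>\<nu>\<^sub>n(k)\<close>. Since all entries of \<open>Q\<close> lie in
  \<open>[\<sigma>, 1-\<sigma>]\<close>, after the first transition the ratios lie in \<open>[r c, c / r]\<close>, where \<open>c\<close> is the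
  ratio of the two weighted initial masses, and every further transition shrinks the width \<open>M - m\<close> by the factor \<open>\<rho>\<close> without decreasing \<open>m\<close>.
  Both the numerator and the denominator of the conditional density are nonnegative
  combinations of \<open>\<alpha>\<^sub>t\<close>, so their ratios lie in the same interval, and the difference of
  logarithms is at most \<open>(M - m)/m \<le> \<rho>\<^sup>t\<^sup>-\<^sup>1 (r\<^sup>-\<^sup>2 - 1)\<close>.
\<close>

definition ratio_bounds :: "'a set \<Rightarrow> real \<Rightarrow> real \<Rightarrow> ('a \<Rightarrow> real) \<Rightarrow> ('a \<Rightarrow> real) \<Rightarrow> bool" where
  "ratio_bounds S m M u v \<longleftrightarrow> (\<forall>k\<in>S. m * v k \<le> u k \<and> u k \<le> M * v k)"

definition kernel_bounds :: "'a set \<Rightarrow> real \<Rightarrow> ('a \<Rightarrow> 'a \<Rightarrow> real) \<Rightarrow> bool" where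
  "kernel_bounds S \<sigma> Q \<longleftrightarrow> (\<forall>j\<in>S. \<forall>k\<in>S. \<sigma> \<le> Q j k \<and> Q j k \<le> 1 - \<sigma>)"

fun forward :: "'a set \<Rightarrow> ('a \<Rightarrow> real) \<Rightarrow> ('a \<Rightarrow> 'a \<Rightarrow> real) \<Rightarrow> (nat \<Rightarrow> 'a \<Rightarrow> real) \<Rightarrow> nat \<Rightarrow> 'a \<Rightarrow> real"
  where
  "forward S \<mu> Q g 0 k = \<mu> k"
| "forward S \<mu> Q g (Suc n) k = (\<Sum>j\<in>S. forward S \<mu> Q g n j * g n j * Q j k)"

definition path_weight ::
  "('a \<Rightarrow> real) \<Rightarrow> ('a \<Rightarrow> 'a \<Rightarrow> real) \<Rightarrow> (nat \<Rightarrow> 'a \<Rightarrow> real) \<Rightarrow> nat \<Rightarrow> (nat \<Rightarrow> 'a) \<Rightarrow> real" where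
  "path_weight \<mu> Q g n xs =
     \<mu> (xs 0) * (\<Prod>s\<in>{1..n}. Q (xs (s - 1)) (xs s)) * (\<Prod>s\<in>{0..<n}. g s (xs s))"

subsection \<open>Forward variables as sums over hidden paths\<close>

lemma sum_PiE_insert_eq:
  assumes "a \<notin> I" "finite I" "finite (S a)" "\<forall>i\<in>I. finite (S i)"
  shows "(\<Sum>xs\<in>PiE (insert a I) S. F xs) = (\<Sum>k\<in>S a. \<Sum>f\<in>PiE I S. F (f(a := k)))"
proof -
  have "(\<Sum>xs\<in>PiE (insert a I) S. F xs) = (\<Sum>p\<in>S a \<times> PiE I S. F ((\<lambda>(y, g). g(a := y)) p))"
    unfolding PiE_insert_eq
    by (subst sum.reindex[OF inj_combinator[OF assms(1)]]) (simp add: comp_def)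
  also have "\<dots> = (\<Sum>k\<in>S a. \<Sum>f\<in>PiE I S. F (f(a := k)))"
    by (simp add: sum.cartesian_product; intro sum.cong; auto)
  finally show ?thesis .
qed

lemma path_weight_extend:
  "path_weight \<mu> Q g (Suc n) (f(Suc n := k)) = path_weight \<mu> Q g n f * g n (f n) * Q (f n) k"
proof -
  have Q: "(\<Prod>s\<in>{1..Suc n}. Q ((f(Suc n := k)) (s - 1)) ((f(Suc n := k)) s))
        = (\<Prod>s\<in>{1..n}. Q (f (s - 1)) (f s)) * Q (f n) k"
    by (subst prod.cl_ivl_Suc) (auto intro!: prod.cong)
  have g: "(\<Prod>s\<in>{0..<Suc n}. g s ((f(Suc n := k)) s)) = (\<Prod>s\<in>{0..<n}. g s (f s)) * g n (f n)"
    by (subst prod.atLeast0_lessThan_Suc) (auto intro!: prod.cong)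
  show ?thesis
    unfolding path_weight_def Q g by (simp add: mult_ac)
qed

lemma sum_paths_eq_forward:
  assumes "finite S"
  shows "(\<Sum>xs\<in>PiE {0..n} (\<lambda>_. S). h (xs n) * path_weight \<mu> Q g n xs)
           = (\<Sum>k\<in>S. h k * forward S \<mu> Q g n k)"
proof (induction n arbitrary: h)
  case 0
  have "{0..0::nat} = insert 0 {}" by auto
  then show ?case
    using assms by (simp add: sum_PiE_insert_eq path_weight_def)
next
  case (Suc n)
  have "{0..Suc n} = insert (Suc n) {0..n}" by auto
  then have "(\<Sum>xs\<in>PiE {0..Suc n} (\<lambda>_. S). h (xs (Suc n)) * path_weight \<mu> Q g (Suc n) xs)
      = (\<Sum>k\<in>S. \<Sum>f\<in>PiE {0..n} (\<lambda>_. S). h k * (path_weight \<mu> Q g n f * g n (f n) * Q (f n) k))"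
    using assms by (simp add: sum_PiE_insert_eq path_weight_extend)
  also have "\<dots> = (\<Sum>k\<in>S. h k * (\<Sum>f\<in>PiE {0..n} (\<lambda>_. S).
                     g n (f n) * Q (f n) k * path_weight \<mu> Q g n f))"
    by (simp add: sum_distrib_left mult_ac)
  also have "\<dots> = (\<Sum>k\<in>S. h k * (\<Sum>j\<in>S. g n j * Q j k * forward S \<mu> Q g n j))"
    using Suc.IH[of "\<lambda>j. g n j * Q j _"] by simp
  also have "\<dots> = (\<Sum>k\<in>S. h k * forward S \<mu> Q g (Suc n) k)"
    by (simp add: mult_ac)
  finally show ?case .
qed

lemma hmm_joint_eq_forward:
  fixes \<gamma> :: "nat \<Rightarrow> real \<Rightarrow> real" and T :: "nat \<Rightarrow> real poly" and y :: "nat \<Rightarrow> real"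
  defines "G \<equiv> \<lambda>s j. emis \<gamma> T s j (y s)"
  shows "hmm_joint K' \<mu> Q \<gamma> T t t x y
           = (\<Sum>k\<in>{1..K'}. (if k \<noteq> x then 1 else 0) * forward {1..K'} \<mu> Q G t k)"
    and "hmm_joint K' \<mu> Q \<gamma> T t (Suc t) x y
           = (\<Sum>k\<in>{1..K'}. (if k \<noteq> x then G t k else 0) * forward {1..K'} \<mu> Q G t k)"
  unfolding hmm_joint_def G_def sum_paths_eq_forward[OF finite_atLeastAtMost, symmetric]
  by (auto simp: path_weight_def intro!: sum.cong)

lemma forward_nonneg:
  assumes "\<forall>j\<in>S. 0 \<le> \<mu> j" "\<forall>s. \<forall>j\<in>S. 0 \<le> g s j" "\<forall>j\<in>S. \<forall>k\<in>S. 0 \<le> Q j k" "k \<in> S"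
  shows "0 \<le> forward S \<mu> Q g n k"
  using assms(4) by (induction n arbitrary: k) (use assms in \<open>auto intro!: sum_nonneg\<close>)

lemma forward_eq_0_if_initial_mass_eq_0:
  assumes "finite S" "\<forall>j\<in>S. 0 \<le> \<mu> j" "\<forall>j\<in>S. 0 \<le> g 0 j" "(\<Sum>j\<in>S. \<mu> j * g 0 j) = 0"
  shows "forward S \<mu> Q g (Suc n) k = 0"
proof (induction n arbitrary: k)
  case 0
  have "\<forall>j\<in>S. \<mu> j * g 0 j = 0"
    using assms by (subst sum_nonneg_eq_0_iff[symmetric]) auto
  then show ?case by (auto intro!: sum.neutral)
qed simp

subsection \<open>Ratio bounds under a kernel with entries in \<open>[\<sigma>, 1-\<sigma>]\<close>\<close>

lemma stoch_lb_kernel_bounds: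
  assumes "stoch_lb n \<sigma> Q" "2 \<le> n" "0 \<le> \<sigma>"
  shows "kernel_bounds {1..n} \<sigma> Q"
  unfolding kernel_bounds_def
proof (intro ballI conjI)
  fix j k assume j: "j \<in> {1..n}" and k: "k \<in> {1..n}"
  have lb: "\<forall>j\<in>{1..n}. \<forall>k\<in>{1..n}. \<sigma> \<le> Q j k" and row: "(\<Sum>i\<in>{1..n}. Q j i) = 1"
    using assms(1) j unfolding stoch_lb_def by auto
  then show "\<sigma> \<le> Q j k" using j k by blast
  define k' where "k' = (if k = 1 then 2 else (1::nat))"
  have k': "k' \<in> {1..n} - {k}" using k assms(2) by (auto simp: k'_def)
  have "Q j k' \<le> (\<Sum>i\<in>{1..n} - {k}. Q j i)"
    by (rule member_le_sum) (use k' lb j assms(3) in \<open>auto intro: order.trans\<close>)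
  moreover have "(\<Sum>i\<in>{1..n}. Q j i) = Q j k + (\<Sum>i\<in>{1..n} - {k}. Q j i)"
    using k by (simp add: sum.remove)
  ultimately show "Q j k \<le> 1 - \<sigma>" using row lb j k' by force
qed

lemma kernel_bounds_nonneg:
  assumes "kernel_bounds S \<sigma> Q" "0 \<le> \<sigma>"
  shows "\<forall>j\<in>S. \<forall>k\<in>S. 0 \<le> Q j k"
  using assms unfolding kernel_bounds_def by (meson order.trans)

lemma kernel_sum_bounds:
  assumes "finite S" "kernel_bounds S \<sigma> Q" "\<forall>j\<in>S. 0 \<le> w j" "k \<in> S"
  shows "\<sigma> * sum w S \<le> (\<Sum>j\<in>S. w j * Q j k)" "(\<Sum>j\<in>S. w j * Q j k) \<le> (1 - \<sigma>) * sum w S"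
proof -
  have "\<sigma> * w j \<le> w j * Q j k \<and> w j * Q j k \<le> (1 - \<sigma>) * w j" if "j \<in> S" for j
    using assms(2-4) that unfolding kernel_bounds_def by (metis mult.commute mult_right_mono)
  then show "\<sigma> * sum w S \<le> (\<Sum>j\<in>S. w j * Q j k)" "(\<Sum>j\<in>S. w j * Q j k) \<le> (1 - \<sigma>) * sum w S"
    by (auto simp: sum_distrib_left intro!: sum_mono)
qed

lemma ratio_bounds_mult:
  assumes "ratio_bounds S m M u v" "\<forall>j\<in>S. 0 \<le> g j"
  shows "ratio_bounds S m M (\<lambda>j. u j * g j) (\<lambda>j. v j * g j)"
  using assms unfolding ratio_bounds_def
  by (metis mult.assoc mult_right_mono)

lemma ratio_bounds_sum:
  assumes "finite S" "ratio_bounds S m M u v" "\<forall>k\<in>S. 0 \<le> h k"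
  shows "m * (\<Sum>k\<in>S. h k * v k) \<le> (\<Sum>k\<in>S. h k * u k)"
    and "(\<Sum>k\<in>S. h k * u k) \<le> M * (\<Sum>k\<in>S. h k * v k)"
  using ratio_bounds_mult[OF assms(2,3)] unfolding ratio_bounds_def sum_distrib_left
  by (auto simp: mult_ac intro!: sum_mono)

text \<open>Doeblin minorization: one transition brings any two nonnegative vectors within ratio
  \<open>r\<^sup>-\<^sup>2\<close> of each other, where \<open>r = \<sigma>/(1-\<sigma>)\<close>.\<close>

lemma ratio_bounds_kernel_initial:
  assumes "finite S" "kernel_bounds S \<sigma> Q" "0 < \<sigma>" "\<sigma> < 1"
    and "\<forall>j\<in>S. 0 \<le> a j" "\<forall>j\<in>S. 0 \<le> b j" "0 < sum b S"
  defines "c \<equiv> sum a S / sum b S" and "r \<equiv> \<sigma> / (1 - \<sigma>)"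
  shows "ratio_bounds S (r * c) (c / r) (\<lambda>k. \<Sum>j\<in>S. a j * Q j k) (\<lambda>k. \<Sum>j\<in>S. b j * Q j k)"
  unfolding ratio_bounds_def
proof (intro ballI conjI)
  fix k assume k: "k \<in> S"
  note a = kernel_sum_bounds[OF assms(1,2,5) k] and b = kernel_sum_bounds[OF assms(1,2,6) k]
  have c: "0 \<le> c" "c * sum b S = sum a S"
    using assms(5,6,7) by (auto simp: c_def intro!: sum_nonneg divide_nonneg_pos)
  have r: "0 < r" "r * (1 - \<sigma>) = \<sigma>" using assms(3,4) by (auto simp: r_def)
  have "r * c * (\<Sum>j\<in>S. b j * Q j k) \<le> r * c * ((1 - \<sigma>) * sum b S)"
    using b(2) r c by (intro mult_left_mono) auto
  also have "\<dots> = \<sigma> * sum a S" using r c by (metis mult.assoc mult.commute)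
  finally show "r * c * (\<Sum>j\<in>S. b j * Q j k) \<le> (\<Sum>j\<in>S. a j * Q j k)" using a(1) by linarith
  have "\<sigma> / r = 1 - \<sigma>" by (metis r less_irrefl nonzero_mult_div_cancel_left)
  then have "(1 - \<sigma>) * sum a S = c / r * (\<sigma> * sum b S)"
    using c by (metis times_divide_eq_left times_divide_eq_right mult.assoc mult.commute)
  also have "\<dots> \<le> c / r * (\<Sum>j\<in>S. b j * Q j k)"
    using b(1) r c by (intro mult_left_mono) auto
  finally show "(\<Sum>j\<in>S. a j * Q j k) \<le> c / r * (\<Sum>j\<in>S. b j * Q j k)" using a(2) by linarith
qed

text \<open>Contraction: the mass \<open>W\<^sub>1\<close> of \<open>u - m v\<close> and \<open>W\<^sub>2\<close> of \<open>M v - u\<close> are each spread with weight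
  at least \<open>\<sigma>\<close> onto every state, while \<open>v\<close> reaches each state with weight at most \<open>1 - \<sigma>\<close>;
  this raises \<open>m\<close> by \<open>r W\<^sub>1/V\<close> and lowers \<open>M\<close> by \<open>r W\<^sub>2/V\<close>, where \<open>W\<^sub>1 + W\<^sub>2 = (M - m) V\<close>.\<close>

lemma ratio_bounds_kernel_contract:
  assumes S: "finite S" and Q: "kernel_bounds S \<sigma> Q" and \<sigma>: "0 < \<sigma>" "\<sigma> < 1/2"
    and v: "\<forall>j\<in>S. 0 \<le> v j" and uv: "ratio_bounds S m M u v" and mM: "m \<le> M"
  obtains m' M' where "m \<le> m'" "m' \<le> M'" "M' - m' \<le> (1 - \<sigma>/(1-\<sigma>)) * (M - m)"
    "ratio_bounds S m' M' (\<lambda>k. \<Sum>j\<in>S. u j * Q j k) (\<lambda>k. \<Sum>j\<in>S. v j * Q j k)"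
proof -
  define r where "r = \<sigma>/(1-\<sigma>)"
  have r: "0 < r" "r < 1" "r * (1-\<sigma>) = \<sigma>" using \<sigma> by (auto simp: r_def field_simps)
  define V where "V = sum v S"
  show thesis
  proof (cases "V = 0")
    case True
    then have "\<forall>j\<in>S. v j = 0" using S v by (simp add: V_def sum_nonneg_eq_0_iff)
    moreover have "\<forall>j\<in>S. u j = 0 \<or> v j \<noteq> 0"
      using uv unfolding ratio_bounds_def by (metis antisym mult_zero_right)
    ultimately have "ratio_bounds S m m (\<lambda>k. \<Sum>j\<in>S. u j * Q j k) (\<lambda>k. \<Sum>j\<in>S. v j * Q j k)"
      by (simp add: ratio_bounds_def)
    then show thesis using that[of m m] mM r(2) by (simp add: r_def)
  next
    case False
    then have V: "0 < V" using v by (simp add: V_def order.not_eq_order_implies_strict sum_nonneg)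
    define W1 where "W1 = (\<Sum>j\<in>S. u j - m * v j)"
    define W2 where "W2 = (\<Sum>j\<in>S. M * v j - u j)"
    have W: "0 \<le> W1" "0 \<le> W2" "W1 + W2 = (M - m) * V"
      using uv unfolding W1_def W2_def V_def ratio_bounds_def
      by (auto intro!: sum_nonneg simp: sum.distrib[symmetric] sum_distrib_left algebra_simps)
    define m' where "m' = m + r * (W1 / V)"
    define M' where "M' = M - r * (W2 / V)"
    have "M' - m' = (M - m) - r * (W1 / V + W2 / V)"
      unfolding m'_def M'_def by (simp add: algebra_simps)
    also have "W1 / V + W2 / V = M - m"
      using W(3) V by (simp add: add_divide_distrib[symmetric])
    finally have width: "M' - m' = (1 - r) * (M - m)"
      by (simp add: algebra_simps)
    have "m' * vQ \<le> uQ \<and> uQ \<le> M' * vQ"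
      if k: "k \<in> S" and vQ: "vQ = (\<Sum>j\<in>S. v j * Q j k)" and uQ: "uQ = (\<Sum>j\<in>S. u j * Q j k)"
      for k vQ uQ
    proof -
      have "uQ - m * vQ = (\<Sum>j\<in>S. (u j - m * v j) * Q j k)"
           "M * vQ - uQ = (\<Sum>j\<in>S. (M * v j - u j) * Q j k)"
        unfolding uQ vQ by (simp_all add: sum_distrib_left sum_subtractf[symmetric] algebra_simps)
      then have spread: "\<sigma> * W1 \<le> uQ - m * vQ" "\<sigma> * W2 \<le> M * vQ - uQ"
        using kernel_sum_bounds(1)[OF S Q _ k, of "\<lambda>j. u j - m * v j"]
          kernel_sum_bounds(1)[OF S Q _ k, of "\<lambda>j. M * v j - u j"] uv
        by (auto simp: W1_def W2_def ratio_bounds_def)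
      have "vQ \<le> (1 - \<sigma>) * V"
        using kernel_sum_bounds(2)[OF S Q v k] by (simp add: V_def vQ)
      then have shift: "r * (W / V) * vQ \<le> \<sigma> * W" if "0 \<le> W" for W
      proof -
        have "r * (W / V) * vQ \<le> r * (W / V) * ((1 - \<sigma>) * V)"
          using \<open>vQ \<le> (1 - \<sigma>) * V\<close> r that V by (intro mult_left_mono) auto
        also have "\<dots> = (r * (1 - \<sigma>)) * W" using V by simp
        finally show ?thesis by (simp only: r(3))
      qed
      moreover have "m' * vQ = m * vQ + r * (W1 / V) * vQ" "M' * vQ = M * vQ - r * (W2 / V) * vQ"
        unfolding m'_def M'_def by (simp_all add: algebra_simps)
      ultimately show ?thesis using spread shift[OF W(1)] shift[OF W(2)] by linarith
    qed
    moreover have "m \<le> m'" using r W V by (simp add: m'_def)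
    moreover have "m' \<le> M'" using width mult_nonneg_nonneg[of "1 - r" "M - m"] r mM by linarith
    ultimately show thesis using that[of m' M'] width by (auto simp: ratio_bounds_def r_def)
  qed
qed

lemma forward_ratio_contract:
  assumes S: "finite S" and Q: "kernel_bounds S \<sigma> Q" and \<sigma>: "0 < \<sigma>" "\<sigma> < 1/2"
    and g: "\<forall>s. \<forall>j\<in>S. 0 \<le> g s j" and \<nu>: "\<forall>j\<in>S. 0 \<le> \<nu> j" and "m1 \<le> M1"
    and base: "ratio_bounds S m1 M1 (forward S \<mu> Q g 1) (forward S \<nu> Q g 1)"
  shows "\<exists>m M. m1 \<le> m \<and> m \<le> M \<and> M - m \<le> (1 - \<sigma>/(1-\<sigma>))^n * (M1 - m1)
           \<and> ratio_bounds S m M (forward S \<mu> Q g (Suc n)) (forward S \<nu> Q g (Suc n))"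
proof (induction n)
  case 0
  show ?case using assms(7,8) by (force simp del: forward.simps)
next
  case (Suc n)
  have \<rho>: "0 \<le> 1 - \<sigma>/(1-\<sigma>)" using \<sigma> by (simp add: field_simps)
  obtain m M where mM: "m1 \<le> m" "m \<le> M" "M - m \<le> (1 - \<sigma>/(1-\<sigma>))^n * (M1 - m1)"
    and bd: "ratio_bounds S m M (forward S \<mu> Q g (Suc n)) (forward S \<nu> Q g (Suc n))"
    using Suc.IH by blast
  note forward_nonneg[OF \<nu> g kernel_bounds_nonneg[OF Q less_imp_le[OF \<sigma>(1)]]]
  moreover have g': "\<forall>j\<in>S. 0 \<le> g (Suc n) j" using g by blast
  ultimately have "\<forall>j\<in>S. 0 \<le> forward S \<nu> Q g (Suc n) j * g (Suc n) j"
    by (simp del: forward.simps)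
  then obtain m' M' where m'M': "m \<le> m'" "m' \<le> M'" "M' - m' \<le> (1 - \<sigma>/(1-\<sigma>)) * (M - m)"
    and "ratio_bounds S m' M'
      (\<lambda>k. \<Sum>j\<in>S. forward S \<mu> Q g (Suc n) j * g (Suc n) j * Q j k)
      (\<lambda>k. \<Sum>j\<in>S. forward S \<nu> Q g (Suc n) j * g (Suc n) j * Q j k)"
    by (rule ratio_bounds_kernel_contract[OF S Q \<sigma> _ ratio_bounds_mult[OF bd g'] mM(2)])
  then have "ratio_bounds S m' M' (forward S \<mu> Q g (Suc (Suc n))) (forward S \<nu> Q g (Suc (Suc n)))"
    by (simp add: ratio_bounds_def)
  moreover have "M' - m' \<le> (1 - \<sigma>/(1-\<sigma>))^Suc n * (M1 - m1)"
    using m'M'(3) mult_left_mono[OF mM(3) \<rho>] by (simp add: mult.assoc)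
  moreover have "m1 \<le> m'" using mM(1) m'M'(1) by simp
  ultimately show ?case
    using m'M'(2) by blast
qed

lemma forward_ratio_bounds:
  assumes S: "finite S" and Q: "kernel_bounds S \<sigma> Q" and \<sigma>: "0 < \<sigma>" "\<sigma> < 1/2"
    and g: "\<forall>s. \<forall>j\<in>S. 0 \<le> g s j" and \<mu>: "\<forall>j\<in>S. 0 \<le> \<mu> j" and \<nu>: "\<forall>j\<in>S. 0 \<le> \<nu> j"
    and pos: "0 < (\<Sum>j\<in>S. \<mu> j * g 0 j)" "0 < (\<Sum>j\<in>S. \<nu> j * g 0 j)"
  defines "r \<equiv> \<sigma> / (1 - \<sigma>)"
  obtains m M where "0 < m" "m \<le> M" "(M - m) / m \<le> (1 - r)^n * (1 / r^2 - 1)"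
    "ratio_bounds S m M (forward S \<mu> Q g (Suc n)) (forward S \<nu> Q g (Suc n))"
proof -
  define c where "c = (\<Sum>j\<in>S. \<mu> j * g 0 j) / (\<Sum>j\<in>S. \<nu> j * g 0 j)"
  have r: "0 < r" "r < 1" using \<sigma> by (auto simp: r_def field_simps)
  have c: "0 < c" using pos by (simp add: c_def)
  have "r * r \<le> 1" using r by (simp add: mult_le_one)
  then have "r * c \<le> c / r" using r c by (simp add: field_simps)
  moreover have "ratio_bounds S (r * c) (c / r) (forward S \<mu> Q g 1) (forward S \<nu> Q g 1)"
  proof -
    have "ratio_bounds S (r * c) (c / r)
        (\<lambda>k. \<Sum>j\<in>S. \<mu> j * g 0 j * Q j k) (\<lambda>k. \<Sum>j\<in>S. \<nu> j * g 0 j * Q j k)"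
      unfolding c_def r_def by (rule ratio_bounds_kernel_initial) (use S Q \<sigma> \<mu> \<nu> g pos in auto)
    then show ?thesis by (simp add: ratio_bounds_def)
  qed
  ultimately obtain m M where mM: "r * c \<le> m" "m \<le> M" "M - m \<le> (1 - r)^n * (c / r - r * c)"
    and bd: "ratio_bounds S m M (forward S \<mu> Q g (Suc n)) (forward S \<nu> Q g (Suc n))"
    using forward_ratio_contract[OF S Q \<sigma> g \<nu>] unfolding r_def by blast
  have m: "0 < m" using mult_pos_pos[OF r(1) c] mM(1) by linarith
  have "(M - m) / m \<le> (M - m) / (r * c)"
    using mM r c m by (intro divide_left_mono) auto
  also have "\<dots> \<le> (1 - r)^n * (c / r - r * c) / (r * c)"
    using mM r c by (intro divide_right_mono) auto
  also have "\<dots> = (1 - r)^n * (1 / r^2 - 1)"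
    using r c by (simp add: field_simps power2_eq_square)
  finally show thesis using that[OF m mM(2) _ bd] by simp
qed

subsection \<open>From forward ratios to conditional densities\<close>

lemma abs_ln_ratio_diff_le:
  fixes a b a' b' m M :: real
  assumes "0 < m" "m \<le> M" "0 < a" "0 < b" "0 \<le> b'"
    and "m * b \<le> a" "a \<le> M * b" "m * b' \<le> a'" "a' \<le> M * b'"
  shows "\<bar>ln (a' / a) - ln (b' / b)\<bar> \<le> (M - m) / m"
proof (cases "b' = 0")
  case True
  then show ?thesis using assms by simp
next
  case False
  then have b': "0 < b'" using assms by simp
  then have a': "0 < a'" using mult_pos_pos[OF assms(1) b'] assms(8) by linarith
  define z where "z = (a' / a) / (b' / b)"
  have z: "0 < z" using assms a' b' by (simp add: z_def)
  have "ln (a' / a) - ln (b' / b) = ln z"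
    using assms a' b' by (simp add: z_def ln_div ln_mult)
  moreover have "a' * b \<le> (M * b') * (a / m)"
    using assms by (intro mult_mono) (auto simp: field_simps)
  then have "z \<le> M / m" using assms a' b' by (simp add: z_def field_simps)
  moreover have "b' * a \<le> (a' / m) * (M * b)"
    using assms a' by (intro mult_mono) (auto simp: field_simps)
  then have "1 / z \<le> M / m" using assms a' b' by (simp add: z_def field_simps)
  moreover have "ln z \<le> z - 1" "ln (1 / z) \<le> 1 / z - 1"
    using z by (auto intro!: ln_le_minus_one)
  moreover have "ln (1 / z) = - ln z" "M / m - 1 = (M - m) / m"
    using z assms by (auto simp: ln_div field_simps)
  ultimately show ?thesis by linarith
qed

lemma hmm_cond_abs_ln_diff_le:
  fixes \<gamma> :: "nat \<Rightarrow> real \<Rightarrow> real" and T :: "nat \<Rightarrow> real poly" and y :: "nat \<Rightarrow> real"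
  defines "G \<equiv> \<lambda>s j. emis \<gamma> T s j (y s)"
  assumes "0 < m" "m \<le> M" "ratio_bounds {1..K'} m M (forward {1..K'} \<mu> Q G t) (forward {1..K'} \<nu> Q G t)"
    and "\<forall>k\<in>{1..K'}. 0 \<le> forward {1..K'} \<nu> Q G t k" "\<forall>j\<in>{1..K'}. 0 \<le> G t j"
    and "0 < hmm_joint K' \<mu> Q \<gamma> T t t x y" "0 < hmm_joint K' \<nu> Q \<gamma> T t t x y"
  shows "\<bar>ln (hmm_cond K' \<mu> Q \<gamma> T t x y) - ln (hmm_cond K' \<nu> Q \<gamma> T t x y)\<bar> \<le> (M - m) / m"
proof -
  note J = hmm_joint_eq_forward[where \<gamma> = \<gamma> and T = T and y = y, folded G_def]
  have den: "m * hmm_joint K' \<nu> Q \<gamma> T t t x y \<le> hmm_joint K' \<mu> Q \<gamma> T t t x y"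
    "hmm_joint K' \<mu> Q \<gamma> T t t x y \<le> M * hmm_joint K' \<nu> Q \<gamma> T t t x y"
    unfolding J(1) by (rule ratio_bounds_sum[OF _ assms(4)]; simp)+
  have num: "m * hmm_joint K' \<nu> Q \<gamma> T t (Suc t) x y \<le> hmm_joint K' \<mu> Q \<gamma> T t (Suc t) x y"
    "hmm_joint K' \<mu> Q \<gamma> T t (Suc t) x y \<le> M * hmm_joint K' \<nu> Q \<gamma> T t (Suc t) x y"
    unfolding J(2) by (rule ratio_bounds_sum[OF _ assms(4)]; use assms(6) in \<open>simp add: G_def\<close>)+
  have "0 \<le> hmm_joint K' \<nu> Q \<gamma> T t (Suc t) x y"
    unfolding J(2) using assms(5,6) by (intro sum_nonneg mult_nonneg_nonneg) (simp_all add: G_def)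
  then show ?thesis
    unfolding hmm_cond_def by (rule abs_ln_ratio_diff_le[OF assms(2,3,7,8) _ den num])
qed

lemma emis_nonneg:
  assumes "in_Theta K d \<sigma> \<Gamma> K' \<pi> Q \<gamma> T" "\<forall>g\<in>\<Gamma>. prob_density g" "k \<in> {1..K'}"
  shows "0 \<le> emis \<gamma> T s k y"
proof -
  have "\<gamma> k \<in> \<Gamma>" using assms(1,3) by (simp add: in_Theta_def)
  then show ?thesis using assms(2) by (simp add: prob_density_def emis_def)
qed

lemma initial_mass_pos:
  assumes "1 \<le> t" "0 < hmm_joint K' \<mu> Q \<gamma> T t t x y"
    and "\<forall>j\<in>{1..K'}. 0 \<le> \<mu> j" "\<forall>j\<in>{1..K'}. 0 \<le> emis \<gamma> T 0 j (y 0)"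
  shows "0 < (\<Sum>j\<in>{1..K'}. \<mu> j * emis \<gamma> T 0 j (y 0))"
proof (rule ccontr)
  assume "\<not> ?thesis"
  moreover have "0 \<le> (\<Sum>j\<in>{1..K'}. \<mu> j * emis \<gamma> T 0 j (y 0))"
    using assms(3,4) by (intro sum_nonneg mult_nonneg_nonneg) simp_all
  ultimately have "(\<Sum>j\<in>{1..K'}. \<mu> j * emis \<gamma> T 0 j (y 0)) = 0" by linarith
  moreover obtain n where t: "t = Suc n" using assms(1) by (cases t) auto
  ultimately have "forward {1..K'} \<mu> Q (\<lambda>s j. emis \<gamma> T s j (y s)) t k = 0" for k
    using assms(3,4) by (simp only: forward_eq_0_if_initial_mass_eq_0 finite_atLeastAtMost)
  then show False using assms(2) unfolding hmm_joint_eq_forward(1) by simp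
qed

lemma rate_constant_bound:
  fixes r :: real
  assumes "0 < r" "r < 1" "1 \<le> t"
  shows "(1 - r)^(t - 1) * (1 / r^2 - 1) \<le> (2 / ((1 - r) * (1 - (1 - r))^3)) * (1 - r)^t"
proof -
  have "1 / r^2 \<le> 1 / r^3" using assms by (intro divide_left_mono) (auto simp: power_decreasing)
  also have "\<dots> \<le> 2 / r^3" using assms by (intro divide_right_mono) auto
  finally have "(1 - r)^(t - 1) * (1 / r^2 - 1) \<le> (1 - r)^(t - 1) * (2 / r^3)"
    using assms by (intro mult_left_mono) auto
  also have "\<dots> = (2 / ((1 - r) * (1 - (1 - r))^3)) * (1 - r)^t"
    using assms by (cases t) (auto simp: field_simps)
  finally show ?thesis .
qed

theorem lemma15:
  fixes K d :: nat and \<sigma> :: real and \<Gamma> :: "(real \<Rightarrow> real) set"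
    and K' :: nat and \<pi> :: "nat \<Rightarrow> real" and Q :: "nat \<Rightarrow> nat \<Rightarrow> real"
    and \<gamma> :: "nat \<Rightarrow> real \<Rightarrow> real" and T :: "nat \<Rightarrow> real poly"
    and t x :: nat and \<mu> \<nu> y :: "nat \<Rightarrow> real"
  assumes "1 \<le> K" "1 \<le> d" "0 < \<sigma>" "\<sigma> < 1"
    and "\<forall>g\<in>\<Gamma>. prob_density g"
    and "\<sigma> < 1/2"
    and "in_Theta K d \<sigma> \<Gamma> K' \<pi> Q \<gamma> T"
    and "2 \<le> K'"
    and "1 \<le> t"
    and "prob_vec K' \<mu>" "prob_vec K' \<nu>"
    and "x \<in> {1..K'}"
    and "0 < hmm_joint K' \<mu> Q \<gamma> T t t x y" "0 < hmm_joint K' \<nu> Q \<gamma> T t t x y"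
  shows "\<bar>ln (hmm_cond K' \<mu> Q \<gamma> T t x y) - ln (hmm_cond K' \<nu> Q \<gamma> T t x y)\<bar>
           \<le> (2 / ((1 - \<sigma>/(1-\<sigma>)) * (1 - (1 - \<sigma>/(1-\<sigma>)))^3)) * (1 - \<sigma>/(1-\<sigma>)) ^ t"
proof -
  let ?G = "\<lambda>s j. emis \<gamma> T s j (y s)"
  have Q: "kernel_bounds {1..K'} \<sigma> Q"
    using assms(3,7,8) by (intro stoch_lb_kernel_bounds) (auto simp: in_Theta_def)
  have G: "\<forall>s. \<forall>j\<in>{1..K'}. 0 \<le> ?G s j" using emis_nonneg[OF assms(7,5)] by blast
  have \<mu>: "\<forall>j\<in>{1..K'}. 0 \<le> \<mu> j" and \<nu>: "\<forall>j\<in>{1..K'}. 0 \<le> \<nu> j"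
    using assms(10,11) by (auto simp: prob_vec_def)
  have r: "0 < \<sigma>/(1-\<sigma>)" "\<sigma>/(1-\<sigma>) < 1" using assms(3,6) by (auto simp: field_simps)
  obtain m M where mM: "0 < m" "m \<le> M" "(M - m) / m \<le> (1 - \<sigma>/(1-\<sigma>))^(t - 1) * (1 / (\<sigma>/(1-\<sigma>))^2 - 1)"
    and bd: "ratio_bounds {1..K'} m M (forward {1..K'} \<mu> Q ?G t) (forward {1..K'} \<nu> Q ?G t)"
    using forward_ratio_bounds[OF finite_atLeastAtMost Q assms(3,6) G \<mu> \<nu>, of "t - 1"]
      initial_mass_pos[OF assms(9,13) \<mu>] initial_mass_pos[OF assms(9,14) \<nu>] G assms(9)
    by auto
  have "\<forall>k\<in>{1..K'}. 0 \<le> forward {1..K'} \<nu> Q ?G t k"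
    using forward_nonneg[OF \<nu> G kernel_bounds_nonneg[OF Q less_imp_le[OF assms(3)]]] by blast
  with G have "\<bar>ln (hmm_cond K' \<mu> Q \<gamma> T t x y) - ln (hmm_cond K' \<nu> Q \<gamma> T t x y)\<bar> \<le> (M - m) / m"
    by (intro hmm_cond_abs_ln_diff_le[OF mM(1,2) bd _ _ assms(13,14)]) blast+
  moreover have "(M - m) / m \<le> (2 / ((1 - \<sigma>/(1-\<sigma>)) * (1 - (1 - \<sigma>/(1-\<sigma>)))^3)) * (1 - \<sigma>/(1-\<sigma>)) ^ t"
    by (rule order.trans[OF mM(3) rate_constant_bound[OF r assms(9)]])
  ultimately show ?thesis by linarith
qed

end
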